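(* Let $K$ be a field of characteristic zero, $\mathfrak{g}$ a finite-dimensional Lie algebra over $K$, $\mathfrak{g}_1$ an ideal of codimension one in $\mathfrak{g}$, and $f,f'\in\mathfrak{g}^*$ with restrictions $f_1=f|_{\mathfrak{g}_1}$, $f'_1=f'|_{\mathfrak{g}_1}$. Let $\mathfrak{p}_1$ be a subalgebra of $\mathfrak{g}_1$ that is a polarization of both $f_1$ and $f'_1$ in $\mathfrak{g}_1$, and suppose $f|_{\mathfrak{p}_1}=f'|_{\mathfrak{p}_1}$. Let $\mathfrak{p}$ be a polarization of $f$ and $\mathfrak{p}'$ a polarization of $f'$ in $\mathfrak{g}$ such that $\mathfrak{p}\cap\mathfrak{g}_1=\mathfrak{p}'\cap\mathfrak{g}_1=\mathfrak{p}_1$. Then $\mathfrak{p}=\mathfrak{p}'$.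
   Context: For a Lie algebra $\mathfrak{a}$ and $\varphi\in\mathfrak{a}^*$, a polarization of $\varphi$ in $\mathfrak{a}$ is a Lie subalgebra $\mathfrak{p}\subseteq\mathfrak{a}$ with $\varphi([\mathfrak{p},\mathfrak{p}])=0$ and $\dim\mathfrak{p}=\frac12(\dim\mathfrak{a}+\dim\mathfrak{a}^{\varphi})$, where $\mathfrak{a}^\varphi=\{x\in\mathfrak{a}\mid \varphi([x,\mathfrak{a}])=0\}$. *)

theory Defs
  imports Complex_Main
begin

definition lie_algebra ::
  "('k::field \<Rightarrow> 'v::ab_group_add \<Rightarrow> 'v) \<Rightarrow> ('v \<Rightarrow> 'v \<Rightarrow> 'v) \<Rightarrow> bool" where
  "lie_algebra scale br \<longleftrightarrow>
     vector_space scale \<and>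
     (\<forall>x. Vector_Spaces.linear scale scale (br x)) \<and>
     (\<forall>y. Vector_Spaces.linear scale scale (\<lambda>x. br x y)) \<and>
     (\<forall>x. br x x = 0) \<and>
     (\<forall>x y z. br x (br y z) + br y (br z x) + br z (br x y) = 0)"

definition lie_subalgebra ::
  "('k::field \<Rightarrow> 'v::ab_group_add \<Rightarrow> 'v) \<Rightarrow> ('v \<Rightarrow> 'v \<Rightarrow> 'v) \<Rightarrow> 'v set \<Rightarrow> bool" where
  "lie_subalgebra scale br S \<longleftrightarrow>
     module.subspace scale S \<and> (\<forall>x\<in>S. \<forall>y\<in>S. br x y \<in> S)"

definition lie_ideal ::
  "('k::field \<Rightarrow> 'v::ab_group_add \<Rightarrow> 'v) \<Rightarrow> ('v \<Rightarrow> 'v \<Rightarrow> 'v) \<Rightarrow> 'v set \<Rightarrow> 'v set \<Rightarrow> bool" where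
  "lie_ideal scale br I A \<longleftrightarrow>
     module.subspace scale I \<and> I \<subseteq> A \<and> (\<forall>x\<in>A. \<forall>y\<in>I. br x y \<in> I)"

definition stabilizer ::
  "('v \<Rightarrow> 'v \<Rightarrow> 'v) \<Rightarrow> ('v \<Rightarrow> 'k::zero) \<Rightarrow> 'v set \<Rightarrow> 'v set" where
  "stabilizer br \<phi> A = {x \<in> A. \<forall>y\<in>A. \<phi> (br x y) = 0}"

definition polarization ::
  "('k::field \<Rightarrow> 'v::ab_group_add \<Rightarrow> 'v) \<Rightarrow> ('v \<Rightarrow> 'v \<Rightarrow> 'v) \<Rightarrow> ('v \<Rightarrow> 'k) \<Rightarrow> 'v set \<Rightarrow> 'v set \<Rightarrow> bool" where
  "polarization scale br \<phi> A P \<longleftrightarrow>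
     lie_subalgebra scale br P \<and> P \<subseteq> A \<and>
     (\<forall>x\<in>P. \<forall>y\<in>P. \<phi> (br x y) = 0) \<and>
     2 * vector_space.dim scale P = vector_space.dim scale A + vector_space.dim scale (stabilizer br \<phi> A)"

end

theory Submission
  imports Defs
begin

(* The argument only uses the linear algebra of alternating bilinear forms.  For a linear
   form phi, the form  B_phi(x,y) = phi([x,y])  is alternating, and for every subspace A
   and every B_phi-isotropic subspace U of A we have
       2 dim U <= dim A + dim (radical of B_phi on A),
   proved by splitting off hyperbolic pairs (induction on dim A).  Hence a polarization
   of phi in A is a maximal isotropic subspace: any isotropic subspace of A containing
   it equals it.

   For the theorem we show p <= p' (the other inclusion is symmetric).  Every bracket
   lies in the codimension-one ideal g1, so [p,p] <= p /\ g1 = p1, where f and f' agree.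
   Take x in p outside g1.  If p' <= g1, then p' = p1 <= p and p is f'-isotropic, so
   p = p' by maximality of p'.  Otherwise pick a in p' outside g1 and write
   d = a - c x in g1; d is f'-orthogonal to p1, so span(d, p1) is an f'-isotropic
   subspace of g1 containing p1, hence d lies in p1 by maximality of p1, and x lies
   in p'. *)

section \<open>Alternating bilinear forms\<close>

definition radical :: "('v \<Rightarrow> 'v \<Rightarrow> 'k::zero) \<Rightarrow> 'v set \<Rightarrow> 'v set" where
  "radical b A = {x \<in> A. \<forall>y\<in>A. b x y = 0}"

definition isotropic :: "('v \<Rightarrow> 'v \<Rightarrow> 'k::zero) \<Rightarrow> 'v set \<Rightarrow> bool" where
  "isotropic b U \<longleftrightarrow> (\<forall>x\<in>U. \<forall>y\<in>U. b x y = 0)"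

locale alternating_form = vector_space scale
  for scale :: "'a::field \<Rightarrow> 'b::ab_group_add \<Rightarrow> 'b" (infixr \<open>*s\<close> 75) +
  fixes b :: "'b \<Rightarrow> 'b \<Rightarrow> 'a"
  assumes add_left: "\<And>x y z. b (x + y) z = b x z + b y z"
    and scale_left: "\<And>c x y. b (c *s x) y = c * b x y"
    and add_right: "\<And>x y z. b z (x + y) = b z x + b z y"
    and scale_right: "\<And>c x y. b y (c *s x) = c * b y x"
    and alternating: "\<And>x. b x x = 0"
begin

lemma zero_left [simp]: "b 0 y = 0"
  using scale_left[of 0 0 y] by simp

lemma zero_right [simp]: "b y 0 = 0"
  using scale_right[where c=0 and x=0 and y=y] by simp

lemma diff_left: "b (x - z) y = b x y - b z y"
  using scale_left[where c="-1" and x=z and y=y] add_left[of x "- z" y]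
  by (simp add: scale_minus_left)

lemma diff_right: "b y (x - z) = b y x - b y z"
  using scale_right[where c="-1" and x=z and y=y] add_right[where z=y and x=x and y="- z"]
  by (simp add: scale_minus_left)

lemma skew: "b x y = - b y x"
proof -
  have "b (x + y) (x + y) = b x x + b x y + (b y x + b y y)"
    by (simp only: add_left add_right ac_simps)
  then have "b x y + b y x = 0" by (simp add: alternating)
  then show ?thesis by (simp add: eq_neg_iff_add_eq_0)
qed

lemma isotropic_span:
  assumes iso: "isotropic b S"
  shows "isotropic b (span S)"
proof -
  have right: "b x y = 0" if "x \<in> S" "y \<in> span S" for x y
    using that(2)
  proof (induction rule: span_induct_alt)
    case (step c u v)
    then show ?case using iso that(1) by (simp add: isotropic_def add_right scale_right)
  qed simp
  have "b x y = 0" if "x \<in> span S" "y \<in> span S" for x y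
    using that(1)
  proof (induction rule: span_induct_alt)
    case (step c u v) then show ?case using right[OF _ that(2)] by (simp add: add_left scale_left)
  qed simp
  then show ?thesis by (simp add: isotropic_def)
qed

lemma isotropic_insert:
  assumes "isotropic b S" "\<forall>y\<in>S. b d y = 0"
  shows "isotropic b (insert d S)"
  using assms skew[of _ d] by (auto simp: isotropic_def alternating)

definition hyperbolic_complement :: "'b set \<Rightarrow> 'b \<Rightarrow> 'b \<Rightarrow> 'b set" where
  "hyperbolic_complement A e g = {x \<in> A. b x e = 0 \<and> b x g = 0}"

lemma subspace_hyperbolic_complement:
  "subspace A \<Longrightarrow> subspace (hyperbolic_complement A e g)"
  unfolding hyperbolic_complement_def subspace_def
  by (auto simp: subspace_0 subspace_add subspace_scale add_left scale_left)

lemma hyperbolic_partner: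
  assumes A: "subspace A" and e: "e \<in> A" "e \<notin> radical b A"
  obtains g where "g \<in> A" "b e g = 1"
proof -
  obtain g0 where g0: "g0 \<in> A" "b e g0 \<noteq> 0" using e by (auto simp: radical_def)
  show ?thesis
  proof
    show "inverse (b e g0) *s g0 \<in> A" using A g0(1) by (rule subspace_scale)
    show "b e (inverse (b e g0) *s g0) = 1" using g0(2) by (simp add: scale_right)
  qed
qed

text \<open>Passing to the hyperbolic complement does not enlarge the radical,
  since A = span {e, g} + complement.\<close>

lemma hyperbolic_complement_radical:
  assumes A: "subspace A" and eg: "e \<in> A" "g \<in> A" "b e g = 1"
  shows "radical b (hyperbolic_complement A e g) \<subseteq> radical b A"
proof
  fix x assume x: "x \<in> radical b (hyperbolic_complement A e g)"
  have bge: "b g e = -1" using skew[of g e] eg(3) by simp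
  have "b x y = 0" if y: "y \<in> A" for y
  proof -
    define y' where "y' = y - b y g *s e + b y e *s g"
    have "y' \<in> A" unfolding y'_def using y eg A
      by (intro subspace_add subspace_diff subspace_scale) auto
    moreover have "b y' e = 0" "b y' g = 0"
      unfolding y'_def using eg(3) bge by (simp_all add: add_left diff_left scale_left alternating)
    ultimately have "b x y' = 0"
      using x by (auto simp: radical_def hyperbolic_complement_def)
    moreover have "b x e = 0" "b x g = 0"
      using x by (auto simp: radical_def hyperbolic_complement_def)
    ultimately show ?thesis unfolding y'_def by (simp add: add_right diff_right scale_right)
  qed
  then show "x \<in> radical b A" using x by (auto simp: radical_def hyperbolic_complement_def)
qed

end

locale fd_alternating_form = alternating_form scale b + finite_dimensional_vector_space scale Basis
  for scale :: "'a::field \<Rightarrow> 'b::ab_group_add \<Rightarrow> 'b" (infixr \<open>*s\<close> 75)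
  and b and Basis
begin

lemma hyperbolic_complement_dim:
  assumes A: "subspace A" and eg: "e \<in> A" "g \<in> A" "b e g = 1"
  shows "dim (hyperbolic_complement A e g) + 2 \<le> dim A"
proof -
  let ?C = "hyperbolic_complement A e g"
  have span_C: "span ?C = ?C" using subspace_hyperbolic_complement[OF A] by simp
  have bge: "b g e = -1" using skew[of g e] eg(3) by simp
  have g_notin: "g \<notin> span ?C" unfolding span_C using bge by (auto simp: hyperbolic_complement_def)
  have e_notin: "e \<notin> span (insert g ?C)"
  proof
    assume "e \<in> span (insert g ?C)"
    then obtain k where "e - k *s g \<in> ?C" using span_C by (auto simp: span_insert)
    then have "b (e - k *s g) g = 0" by (simp add: hyperbolic_complement_def)
    then show False using eg(3) by (simp add: diff_left scale_left alternating)
  qed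
  have "dim (insert e (insert g ?C)) = dim ?C + 2"
    using g_notin e_notin by (simp add: dim_insert)
  moreover have "dim (insert e (insert g ?C)) \<le> dim A"
    using eg by (intro dim_subset) (auto simp: hyperbolic_complement_def)
  ultimately show ?thesis by simp
qed

lemma orthogonal_hyperplane_dim:
  assumes U: "subspace U" and e: "e \<in> U" "b e g = 1"
  shows "dim U \<le> dim {x \<in> U. b x g = 0} + 1"
proof -
  let ?H = "{x \<in> U. b x g = 0}"
  have "U \<subseteq> span (insert e ?H)"
  proof
    fix u assume u: "u \<in> U"
    have "u - b u g *s e \<in> ?H"
      using u e U by (auto simp: subspace_diff subspace_scale diff_left scale_left)
    then show "u \<in> span (insert e ?H)" by (auto simp: span_insert intro: span_base)
  qed
  then have "dim U \<le> dim (insert e ?H)" by (rule dim_mono)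
  also have "\<dots> \<le> dim ?H + 1" by (simp add: dim_insert)
  finally show ?thesis .
qed

text \<open>Induction on dim A, splitting off a
  hyperbolic pair whose first member lies in U but outside the radical.\<close>

lemma isotropic_dim_bound:
  assumes "subspace A" "subspace U" "U \<subseteq> A" "isotropic b U"
  shows "2 * dim U \<le> dim A + dim (radical b A)"
  using assms
proof (induction "dim A" arbitrary: A U rule: less_induct)
  case less
  show ?case
  proof (cases "U \<subseteq> radical b A")
    case True
    then have "dim U \<le> dim (radical b A)" by (rule dim_subset)
    moreover have "dim (radical b A) \<le> dim A" by (rule dim_subset) (auto simp: radical_def)
    ultimately show ?thesis by simp
  next
    case False
    then obtain e where e: "e \<in> U" "e \<notin> radical b A" by auto
    with less.prems obtain g where g: "g \<in> A" "b e g = 1"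
      by (meson hyperbolic_partner subsetD)
    let ?C = "hyperbolic_complement A e g" and ?U' = "{x \<in> U. b x g = 0}"
    have eA: "e \<in> A" using e(1) less.prems(3) by auto
    have U': "subspace ?U'"
      using less.prems(2) unfolding subspace_def by (auto simp: add_left scale_left)
    have U'C: "?U' \<subseteq> ?C"
      using less.prems(3,4) e(1) by (auto simp: isotropic_def hyperbolic_complement_def)
    have dim_C: "dim ?C + 2 \<le> dim A"
      by (rule hyperbolic_complement_dim[OF less.prems(1) eA g])
    have "2 * dim ?U' \<le> dim ?C + dim (radical b ?C)"
      using less.hyps[of ?C ?U'] dim_C subspace_hyperbolic_complement[OF less.prems(1)] U' U'C
        less.prems(4) by (simp add: isotropic_def)
    moreover have "dim (radical b ?C) \<le> dim (radical b A)"
      by (rule dim_subset[OF hyperbolic_complement_radical[OF less.prems(1) eA g]])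
    moreover have "dim U \<le> dim ?U' + 1"
      by (rule orthogonal_hyperplane_dim[OF less.prems(2) e(1) g(2)])
    ultimately show ?thesis using dim_C by simp
  qed
qed

end

section \<open>Lie algebras and polarizations\<close>

locale lie_alg =
  fixes scale :: "'k::field \<Rightarrow> 'v::ab_group_add \<Rightarrow> 'v" (infixr \<open>*s\<close> 75)
    and br :: "'v \<Rightarrow> 'v \<Rightarrow> 'v"
  assumes is_lie_algebra: "lie_algebra scale br"
begin

sublocale vector_space scale
  using is_lie_algebra by (simp add: lie_algebra_def)

lemma bracket_hom_left: "module_hom scale scale (\<lambda>x. br x y)"
  and bracket_hom_right: "module_hom scale scale (br x)"
  and bracket_alternating: "br x x = 0"
  using is_lie_algebra by (auto simp: lie_algebra_def module_hom_iff_linear)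

lemma bracket_diff_right: "br y (u - z) = br y u - br y z"
  by (rule module_hom.diff[OF bracket_hom_right])

lemma bracket_skew: "br x y = - br y x"
proof -
  have "br (x + y) (x + y) = br x x + br x y + (br y x + br y y)"
    by (simp only: module_hom.add[OF bracket_hom_left] module_hom.add[OF bracket_hom_right]
        ac_simps)
  then have "br x y + br y x = 0" by (simp add: bracket_alternating)
  then show ?thesis by (simp add: eq_neg_iff_add_eq_0)
qed

lemma bracket_form_alternating:
  assumes "Vector_Spaces.linear scale (*) \<phi>"
  shows "alternating_form scale (\<lambda>x y. \<phi> (br x y))"
  using assms module_hom.zero[OF assms[unfolded linear_iff_module_hom]]
    module_hom.add[OF bracket_hom_left] module_hom.scale[OF bracket_hom_left]
    module_hom.add[OF bracket_hom_right] module_hom.scale[OF bracket_hom_right]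
  unfolding alternating_form_def alternating_form_axioms_def Vector_Spaces.linear_iff
  by (simp add: bracket_alternating vector_space_axioms)

lemma stabilizer_eq_radical: "stabilizer br \<phi> A = radical (\<lambda>x y. \<phi> (br x y)) A"
  by (simp add: stabilizer_def radical_def)

end

locale fd_lie_alg = lie_alg scale br + finite_dimensional_vector_space scale Basis
  for scale :: "'k::field \<Rightarrow> 'v::ab_group_add \<Rightarrow> 'v" (infixr \<open>*s\<close> 75)
    and br and Basis
begin

lemma bracket_form_fd_alternating:
  assumes "Vector_Spaces.linear scale (*) \<phi>"
  shows "fd_alternating_form scale (\<lambda>x y. \<phi> (br x y)) Basis"
  using bracket_form_alternating[OF assms] finite_dimensional_vector_space_axioms
  by (simp add: fd_alternating_form_def)

lemma polarization_maximal:
  assumes lin: "Vector_Spaces.linear scale (*) \<phi>" and pol: "polarization scale br \<phi> A P"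
    and A: "subspace A" and U: "subspace U" "P \<subseteq> U" "U \<subseteq> A"
    and iso: "isotropic (\<lambda>x y. \<phi> (br x y)) U"
  shows "U = P"
proof -
  interpret fd_alternating_form scale "\<lambda>x y. \<phi> (br x y)" Basis
    by (rule bracket_form_fd_alternating[OF lin])
  have P: "subspace P" and dim_P: "2 * dim P = dim A + dim (stabilizer br \<phi> A)"
    using pol by (auto simp: polarization_def lie_subalgebra_def)
  have "2 * dim U \<le> dim A + dim (stabilizer br \<phi> A)"
    unfolding stabilizer_eq_radical by (rule isotropic_dim_bound[OF A U(1,3) iso])
  then have "dim U \<le> dim P" using dim_P by simp
  then show "U = P" using subspace_dim_equal[OF P U(1,2)] by simp
qed

lemma polarization_absorbs:
  assumes lin: "Vector_Spaces.linear scale (*) \<phi>" and pol: "polarization scale br \<phi> A P"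
    and A: "subspace A" and d: "d \<in> A" "\<forall>y\<in>P. \<phi> (br d y) = 0"
  shows "d \<in> P"
proof -
  interpret alternating_form scale "\<lambda>x y. \<phi> (br x y)"
    by (rule bracket_form_alternating[OF lin])
  have P: "P \<subseteq> A" "isotropic (\<lambda>x y. \<phi> (br x y)) P"
    using pol by (auto simp: polarization_def isotropic_def)
  have "isotropic (\<lambda>x y. \<phi> (br x y)) (span (insert d P))"
    using isotropic_span[OF isotropic_insert[OF P(2) d(2)]] .
  moreover have "span (insert d P) \<subseteq> A" using span_minimal[OF _ A] d(1) P(1) by auto
  moreover have "P \<subseteq> span (insert d P)" by (auto intro: span_base)
  ultimately have "span (insert d P) = P"
    using polarization_maximal[OF lin pol A subspace_span] by blast
  then show "d \<in> P" by (metis insert_subset span_superset)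
qed

lemma codim_one_complement:
  assumes g1: "subspace g1" and codim: "dim g1 + 1 = dim (UNIV :: 'v set)" and x: "x \<notin> g1"
  obtains c where "y - c *s x \<in> g1"
proof -
  have span_g1: "span g1 = g1" using g1 by simp
  have "dim (insert x g1) = dimension"
    using x codim by (simp add: dim_insert span_g1 dimension_def)
  then have "y \<in> span (insert x g1)" using dim_eq_full by blast
  then show ?thesis using that span_g1 by (auto simp: span_insert)
qed

text \<open>A codimension-one ideal contains all brackets: modulo the ideal every vector is
  a multiple of a fixed vector outside it.\<close>

lemma codim_one_ideal_bracket:
  assumes ideal: "lie_ideal scale br g1 UNIV" and codim: "dim g1 + 1 = dim (UNIV :: 'v set)"
  shows "br x y \<in> g1"
proof (cases "y \<in> g1")
  case True then show ?thesis using ideal by (simp add: lie_ideal_def)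
next
  case False
  have g1: "subspace g1" using ideal by (simp add: lie_ideal_def)
  obtain c where "x - c *s y \<in> g1" using codim_one_complement[OF g1 codim False] .
  then have "br y (x - c *s y) \<in> g1" using ideal by (simp add: lie_ideal_def)
  moreover have "br y (x - c *s y) = br y x"
    by (simp add: bracket_diff_right module_hom.scale[OF bracket_hom_right] bracket_alternating)
  ultimately show ?thesis using bracket_skew[of x y] g1 by (simp add: subspace_neg)
qed

lemma polarization_subset:
  assumes ideal: "lie_ideal scale br g1 UNIV" and codim: "dim g1 + 1 = dim (UNIV :: 'v set)"
    and f'_lin: "Vector_Spaces.linear scale (*) f'"
    and p1_pol': "polarization scale br f' g1 p1" and agree: "\<forall>x\<in>p1. f x = f' x"
    and p_pol: "polarization scale br f UNIV p" and p'_pol: "polarization scale br f' UNIV p'"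
    and p_int: "p \<inter> g1 = p1" and p'_int: "p' \<inter> g1 = p1"
  shows "p \<subseteq> p'"
proof
  interpret F': alternating_form scale "\<lambda>x y. f' (br x y)"
    by (rule bracket_form_alternating[OF f'_lin])
  have g1: "subspace g1" using ideal by (simp add: lie_ideal_def)
  have p: "subspace p" "\<And>u v. u \<in> p \<Longrightarrow> v \<in> p \<Longrightarrow> br u v \<in> p"
      "\<And>u v. u \<in> p \<Longrightarrow> v \<in> p \<Longrightarrow> f (br u v) = 0"
    and p': "subspace p'" "\<And>u v. u \<in> p' \<Longrightarrow> v \<in> p' \<Longrightarrow> f' (br u v) = 0"
    using p_pol p'_pol by (auto simp: polarization_def lie_subalgebra_def)
  txt \<open>Brackets of p lie in p \<inter> g1 = p1, where f' agrees with f; so p is f'-isotropic.\<close>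
  have p_iso': "f' (br u v) = 0" if "u \<in> p" "v \<in> p" for u v
  proof -
    have "br u v \<in> p1" using p(2)[OF that] codim_one_ideal_bracket[OF ideal codim] p_int by auto
    then show ?thesis using agree p(3)[OF that] by metis
  qed
  fix x assume xp: "x \<in> p"
  show "x \<in> p'"
  proof (cases "x \<in> g1")
    case True then show ?thesis using xp p_int p'_int by auto
  next
    case x_out: False
    show ?thesis
    proof (cases "p' \<subseteq> g1")
      case True
      then have "p' \<subseteq> p" using p_int p'_int by auto
      then have "p = p'"
        using polarization_maximal[OF f'_lin p'_pol subspace_UNIV p(1)] p_iso'
        by (auto simp: isotropic_def)
      then show ?thesis using xp by simp
    next
      case False
      then obtain a where a: "a \<in> p'" "a \<notin> g1" by auto
      obtain c where d: "a - c *s x \<in> g1" using codim_one_complement[OF g1 codim x_out] .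
      txt \<open>The difference d = a - c x is f'-orthogonal to p1, hence lies in p1.\<close>
      have "f' (br (a - c *s x) y) = 0" if y: "y \<in> p1" for y
      proof -
        have "y \<in> p" "y \<in> p'" using y p_int p'_int by auto
        then show ?thesis
          using p'(2)[OF a(1)] p_iso'[OF xp] by (simp add: F'.diff_left F'.scale_left)
      qed
      then have "a - c *s x \<in> p1" using polarization_absorbs[OF f'_lin p1_pol' g1 d] by blast
      then have "c *s x \<in> p'"
        using p'_int subspace_diff[OF p'(1) a(1), of "a - c *s x"] by auto
      moreover have "c \<noteq> 0" using d a(2) by auto
      ultimately show ?thesis using subspace_scale[OF p'(1), of "c *s x" "inverse c"] by simp
    qed
  qed
qed

end

theorem lemma3p6:
  fixes scale :: "'k::field_char_0 \<Rightarrow> 'v::ab_group_add \<Rightarrow> 'v"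
    and br :: "'v \<Rightarrow> 'v \<Rightarrow> 'v"
    and B g1 p1 p p' :: "'v set"
    and f f' :: "'v \<Rightarrow> 'k"
  assumes lie: "lie_algebra scale br"
    and fin: "finite_dimensional_vector_space scale B"
    and ideal: "lie_ideal scale br g1 UNIV"
    and codim: "vector_space.dim scale g1 + 1 = vector_space.dim scale (UNIV :: 'v set)"
    and f_lin: "Vector_Spaces.linear scale (*) f"
    and f'_lin: "Vector_Spaces.linear scale (*) f'"
    and p1_sub: "lie_subalgebra scale br p1" "p1 \<subseteq> g1"
    and p1_pol: "polarization scale br f g1 p1"
    and p1_pol': "polarization scale br f' g1 p1"
    and agree: "\<forall>x\<in>p1. f x = f' x"
    and p_pol: "polarization scale br f UNIV p"
    and p'_pol: "polarization scale br f' UNIV p'"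
    and p_int: "p \<inter> g1 = p1"
    and p'_int: "p' \<inter> g1 = p1"
  shows "p = p'"
proof -
  interpret fd_lie_alg scale br B
    using lie fin by (simp add: fd_lie_alg_def lie_alg_def)
  have agree': "\<forall>x\<in>p1. f' x = f x" using agree by simp
  show ?thesis
  proof
    show "p \<subseteq> p'"
      by (rule polarization_subset[OF ideal codim f'_lin p1_pol' agree p_pol p'_pol p_int p'_int])
    show "p' \<subseteq> p"
      by (rule polarization_subset[OF ideal codim f_lin p1_pol agree' p'_pol p_pol p'_int p_int])
  qed
qed

end
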